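(* Let $m=2k+1$ with $k\in\mathbb{N}$ and $\beta\in(1,k+2)$. For $i\in\{1,\ldots,k\}$ the fixed point $\frac{i}{\beta-1}$ of $T_{\beta,i}$ lies in the interior of $[\frac{i}{\beta},\frac{(i-1)\beta+m-(i-1)}{\beta(\beta-1)}]$, and for $i\in\{k+1,\ldots,m-1\}$ it lies in the interior of $[\frac{i+1}{\beta},\frac{i\beta+m-i}{\beta(\beta-1)}]$.
   Context: $T_{\beta,i}(x)=\beta x-i$. *)

theory Defs
  imports "HOL-Analysis.Analysis"
begin

definition T :: "real \<Rightarrow> nat \<Rightarrow> real \<Rightarrow> real" where
  "T \<beta> i x = \<beta> * x - real i"

end

theory Submission
  imports Defs
begin

text \<open>Both endpoints have denominator dividing \<open>\<beta> (\<beta> - 1)\<close>; clearing it turns each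
  strict inequality with the fixed point \<open>i / (\<beta> - 1)\<close> into a linear inequality in \<open>i\<close>,
  which the bounds \<open>i \<le> k\<close> resp. \<open>i \<ge> k + 1\<close>, \<open>i < m\<close> and \<open>\<beta> < k + 2\<close> settle.\<close>

lemma T_fixed_point:
  assumes "\<beta> \<noteq> 1"
  shows "T \<beta> i (real i / (\<beta> - 1)) = real i / (\<beta> - 1)"
  using assms by (simp add: T_def field_simps)

lemma less_fixed_point_iff:
  fixes a \<beta> :: real
  assumes "1 < \<beta>"
  shows "a / \<beta> < x / (\<beta> - 1) \<longleftrightarrow> a * (\<beta> - 1) < x * \<beta>"
  using assms by (simp add: field_simps)

lemma fixed_point_less_iff:
  fixes u \<beta> :: real
  assumes "1 < \<beta>"
  shows "x / (\<beta> - 1) < u / (\<beta> * (\<beta> - 1)) \<longleftrightarrow> x * \<beta> < u"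
proof -
  have "x / (\<beta> - 1) = x * \<beta> / (\<beta> * (\<beta> - 1))"
    using assms by (simp add: field_simps)
  moreover have "0 < \<beta> * (\<beta> - 1)"
    using assms by simp
  ultimately show ?thesis
    by (metis divide_less_cancel order_less_asym)
qed

theorem lemma3p3:
  fixes k m :: nat and \<beta> :: real
  assumes hm: "m = 2 * k + 1"
    and hb1: "1 < \<beta>" and hb2: "\<beta> < real k + 2"
  shows "(\<forall>i\<in>{1..k}.
            T \<beta> i (real i / (\<beta> - 1)) = real i / (\<beta> - 1) \<and>
            real i / (\<beta> - 1) \<in> interior {real i / \<beta> ..
               ((real i - 1) * \<beta> + real m - (real i - 1)) / (\<beta> * (\<beta> - 1))})
       \<and> (\<forall>i\<in>{k+1..m-1}.
            T \<beta> i (real i / (\<beta> - 1)) = real i / (\<beta> - 1) \<and>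
            real i / (\<beta> - 1) \<in> interior {(real i + 1) / \<beta> ..
               (real i * \<beta> + real m - real i) / (\<beta> * (\<beta> - 1))})"
proof -
  have fixed: "T \<beta> i (real i / (\<beta> - 1)) = real i / (\<beta> - 1)" for i
    using hb1 by (intro T_fixed_point) simp
  have "real i / (\<beta> - 1) \<in> interior {real i / \<beta> ..
          ((real i - 1) * \<beta> + real m - (real i - 1)) / (\<beta> * (\<beta> - 1))}"
    if "i \<in> {1..k}" for i
  proof -
    have "1 \<le> real i" "real i \<le> real k" "real m = 2 * real k + 1"
      using that hm by auto
    then show ?thesis
      using hb1 hb2
      by (simp add: less_fixed_point_iff fixed_point_less_iff) (simp add: algebra_simps)
  qed
  moreover have "real i / (\<beta> - 1) \<in> interior {(real i + 1) / \<beta> ..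
          (real i * \<beta> + real m - real i) / (\<beta> * (\<beta> - 1))}"
    if "i \<in> {k+1..m-1}" for i
  proof -
    have "real k + 1 \<le> real i" "real i < real m"
      using that hm by auto
    then show ?thesis
      using hb1 hb2
      by (simp add: less_fixed_point_iff fixed_point_less_iff) (simp add: algebra_simps)
  qed
  ultimately show ?thesis
    using fixed by blast
qed

end
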